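(* Let $m,n$ be positive integers and $d=2^n$. For a positive integer $k$ let $\ket{b_k}\coloneqq 2^{-k/2}\sum_{i=0}^{2^k-1}\ket{i}\otimes\ket{i}\in\mathbb{C}^{2^k}\otimes\mathbb{C}^{2^k}$, where $\{\ket{i}\}$ is the computational basis. Let $U_p$ be any unitary operator on $\mathbb{C}^{2^m}\otimes\mathbb{C}^{2^n}$, and define the state on $\mathbb{C}^{2^m}\otimes\mathbb{C}^{2^m}\otimes\mathbb{C}^{2^n}\otimes\mathbb{C}^{2^n}$ $$\ket{\varphi}=\left(I_{2^m}\otimes U_p\otimes I_{2^n}\right)\left(\ket{b_m}\otimes\ket{b_n}\right),$$ where $U_p$ acts on the second and third tensor factors. Let $\rho=\operatorname{tr}_{A_2}\left(\ket{\varphi}\bra{\varphi}\right)$ be the density matrix on $\mathbb{C}^{2^n}\otimes\mathbb{C}^{2^n}$ obtained by tracing out the first two tensor factors $A_2=\mathbb{C}^{2^m}\otimes\mathbb{C}^{2^m}$. For $i,j\in\{0,\dots,d-1\}$ let $$p(i,j)\coloneqq 2^n\operatorname{tr}\left(\rho\,\ket{ij}\bra{ij}\right),$$ where $\ket{ij}=\ket{i}\otimes\ket{j}$ with $\ket{i},\ket{j}$ computational basis vectors of $\mathbb{C}^{2^n}$. Let $\{\mathbf{e}_i\}_{i=0}^{d-1}$ be the canonical basis of $\mathbb{R}^{d}$. Then the $d\times d$ matrix $$Q=\sum_{i,j=0}^{d-1}p(i,j)\,\mathbf{e}_i\mathbf{e}_j^\top$$ is doubly stochastic, i.e. $Q$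 has nonnegative real entries, $Q\mathbf{1}_d=\mathbf{1}_d$ and $Q^\top\mathbf{1}_d=\mathbf{1}_d$.
   Context: $\mathbf{1}_d$ denotes the all-ones vector in $\mathbb{R}^d$; $I_k$ the $k\times k$ identity matrix; $\operatorname{tr}_{A_2}$ the partial trace over subsystem $A_2$. *)

theory Defs
  imports "Jordan_Normal_Form.Matrix" Complex_Main
begin

definition ket :: "nat \<Rightarrow> nat \<Rightarrow> complex vec" where
  "ket d i = unit_vec d i"

definition vec_tensor :: "complex vec \<Rightarrow> complex vec \<Rightarrow> complex vec" where
  "vec_tensor v w = vec (dim_vec v * dim_vec w)
     (\<lambda>k. v $ (k div dim_vec w) * w $ (k mod dim_vec w))"

definition mat_tensor :: "complex mat \<Rightarrow> complex mat \<Rightarrow> complex mat" where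
  "mat_tensor A B = mat (dim_row A * dim_row B) (dim_col A * dim_col B)
     (\<lambda>(i,j). A $$ (i div dim_row B, j div dim_col B) * B $$ (i mod dim_row B, j mod dim_col B))"

definition adj :: "complex mat \<Rightarrow> complex mat" where
  "adj A = mat (dim_col A) (dim_row A) (\<lambda>(i,j). cnj (A $$ (j,i)))"

definition unitary :: "nat \<Rightarrow> complex mat \<Rightarrow> bool" where
  "unitary N U \<longleftrightarrow> U \<in> carrier_mat N N \<and> U * adj U = 1\<^sub>m N \<and> adj U * U = 1\<^sub>m N"

definition mtrace :: "complex mat \<Rightarrow> complex" where
  "mtrace A = (\<Sum>i<dim_row A. A $$ (i,i))"

definition outer :: "complex vec \<Rightarrow> complex mat" where
  "outer v = mat (dim_vec v) (dim_vec v) (\<lambda>(i,j). v $ i * cnj (v $ j))"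

definition bell :: "nat \<Rightarrow> complex vec" where
  "bell k = vec (2^k * 2^k)
     (\<lambda>x. complex_of_real (2 powr (- real k / 2)) *
          (\<Sum>i<2^k. (vec_tensor (ket (2^k) i) (ket (2^k) i)) $ x))"

definition ptrace_first :: "nat \<Rightarrow> nat \<Rightarrow> complex mat \<Rightarrow> complex mat" where
  "ptrace_first dA dB R = mat dB dB (\<lambda>(i,j). \<Sum>a<dA. R $$ (a * dB + i, a * dB + j))"

definition phi :: "nat \<Rightarrow> nat \<Rightarrow> complex mat \<Rightarrow> complex vec" where
  "phi m n U = mat_tensor (mat_tensor (1\<^sub>m (2^m)) U) (1\<^sub>m (2^n)) *\<^sub>v vec_tensor (bell m) (bell n)"

definition rho :: "nat \<Rightarrow> nat \<Rightarrow> complex mat \<Rightarrow> complex mat" where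
  "rho m n U = ptrace_first (2^m * 2^m) (2^n * 2^n) (outer (phi m n U))"

definition pdist :: "nat \<Rightarrow> nat \<Rightarrow> complex mat \<Rightarrow> nat \<Rightarrow> nat \<Rightarrow> complex" where
  "pdist m n U i j = 2^n * mtrace (rho m n U * outer (vec_tensor (ket (2^n) i) (ket (2^n) j)))"

text \<open>Q = sum_{i,j} p(i,j) e_i e_j^T, i.e. the d x d matrix with entries p(i,j).\<close>
definition Qmat :: "nat \<Rightarrow> nat \<Rightarrow> complex mat \<Rightarrow> complex mat" where
  "Qmat m n U = mat (2^n) (2^n) (\<lambda>(i,j). pdist m n U i j)"

definition ones :: "nat \<Rightarrow> complex vec" where
  "ones d = vec d (\<lambda>_. 1)"

definition doubly_stochastic :: "nat \<Rightarrow> complex mat \<Rightarrow> bool" where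
  "doubly_stochastic d Q \<longleftrightarrow> Q \<in> carrier_mat d d
     \<and> (\<forall>i<d. \<forall>j<d. Q $$ (i,j) \<in> \<real> \<and> Re (Q $$ (i,j)) \<ge> 0)
     \<and> Q *\<^sub>v ones d = ones d \<and> transpose_mat Q *\<^sub>v ones d = ones d"

end

theory Submission
  imports Defs
begin

text \<open>Up to the factor \<open>2^(-(m+n)/2)\<close>, the amplitude of \<open>|\<phi>\<rangle>\<close> at the basis vector
  \<open>|a\<rangle>|b c\<rangle>|e\<rangle>\<close> is the matrix entry \<open>\<langle>b c|U|a e\<rangle>\<close>: the two maximally entangled
  states feed the first and the last tensor factor into the input of \<open>U\<close>. Tracing out
  \<open>A\<^sub>2\<close> therefore gives \<open>p(i,j) = 2^(-m) \<Sum> |\<langle>b i|U|a j\<rangle>|\<^sup>2\<close> (summed over \<open>a, b\<close>), which is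
  nonnegative, and summing over \<open>j\<close> (resp. \<open>i\<close>) collects the squared norms of \<open>2^m\<close>
  rows (resp. columns) of the unitary \<open>U\<close>, each equal to 1.\<close>

lemma mult_add_less_mult:
  fixes i j A B :: nat
  assumes "i < A" "j < B"
  shows "i * B + j < A * B"
proof -
  have "i * B + j < (i + 1) * B" using assms(2) by simp
  also have "\<dots> \<le> A * B" using assms(1) by (intro mult_right_mono) auto
  finally show ?thesis .
qed

lemma mult_add_div_mod:
  fixes i j B :: nat
  assumes "j < B"
  shows "(i * B + j) div B = i" "(i * B + j) mod B = j"
  using assms by auto

lemma mult_add_eq_mult_add_iff:
  fixes i j k l B :: nat
  assumes "j < B" "l < B"
  shows "i * B + j = k * B + l \<longleftrightarrow> i = k \<and> j = l"
proof
  assume eq: "i * B + j = k * B + l"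
  have "i = k" using arg_cong[OF eq, of "\<lambda>x. x div B"] assms by (simp add: mult_add_div_mod)
  then show "i = k \<and> j = l" using eq by simp
qed simp

lemma sum_lessThan_mult:
  fixes f :: "nat \<Rightarrow> 'a::comm_monoid_add"
  shows "(\<Sum>k<A * B. f k) = (\<Sum>i<A. \<Sum>j<B. f (i * B + j))"
proof -
  have "(\<Sum>k<A * B. f k) = (\<Sum>i<A. sum f {i * B..<i * B + B})"
    by (rule sum.nat_group[symmetric])
  also have "\<dots> = (\<Sum>i<A. \<Sum>j<B. f (i * B + j))"
  proof (rule sum.cong[OF refl])
    fix i
    have "sum f {0 + i * B..<B + i * B} = (\<Sum>j\<in>{0..<B}. f (j + i * B))"
      by (rule sum.shift_bounds_nat_ivl)
    then show "sum f {i * B..<i * B + B} = (\<Sum>j<B. f (i * B + j))"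
      by (simp add: add.commute atLeast0LessThan)
  qed
  finally show ?thesis .
qed

lemma two_powr_minus_half:
  "(2::real) powr (- real k / 2) = 1 / sqrt (2 ^ k)"
proof -
  have "(2::real) powr (real k / 2) = sqrt (2 powr real k)"
    by (rule powr_half_sqrt_powr) simp
  also have "(2::real) powr real k = 2 ^ k"
    by (rule powr_realpow) simp
  finally have "(2::real) powr (real k / 2) = sqrt (2 ^ k)" .
  then show ?thesis
    by (simp only: minus_divide_left[symmetric] powr_minus inverse_eq_divide)
qed

lemma vec_tensor_index:
  assumes "i < dim_vec v" "j < dim_vec w"
  shows "vec_tensor v w $ (i * dim_vec w + j) = v $ i * w $ j"
  using mult_add_less_mult[OF assms] mult_add_div_mod[OF assms(2)] by (simp add: vec_tensor_def)

lemma mat_tensor_index: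
  assumes "i < dim_row A" "j < dim_col A" "k < dim_row B" "l < dim_col B"
  shows "mat_tensor A B $$ (i * dim_row B + k, j * dim_col B + l) = A $$ (i, j) * B $$ (k, l)"
  using mult_add_less_mult[of i "dim_row A" k "dim_row B"]
    mult_add_less_mult[of j "dim_col A" l "dim_col B"] assms
  by (simp add: mat_tensor_def)

lemma mat_tensor_mult_vec_index:
  assumes "i < dim_row A" "k < dim_row B" "dim_vec w = dim_col A * dim_col B"
  shows "(mat_tensor A B *\<^sub>v w) $ (i * dim_row B + k) =
    (\<Sum>j<dim_col A. \<Sum>l<dim_col B. A $$ (i, j) * B $$ (k, l) * w $ (j * dim_col B + l))"
proof -
  have "(mat_tensor A B *\<^sub>v w) $ (i * dim_row B + k) =
     (\<Sum>x<dim_col A * dim_col B. mat_tensor A B $$ (i * dim_row B + k, x) * w $ x)"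
    using mult_add_less_mult[OF assms(1,2)] assms(3)
    by (simp add: scalar_prod_def mat_tensor_def atLeast0LessThan)
  also have "\<dots> = (\<Sum>j<dim_col A. \<Sum>l<dim_col B.
      mat_tensor A B $$ (i * dim_row B + k, j * dim_col B + l) * w $ (j * dim_col B + l))"
    by (rule sum_lessThan_mult)
  also have "\<dots> = (\<Sum>j<dim_col A. \<Sum>l<dim_col B. A $$ (i, j) * B $$ (k, l) * w $ (j * dim_col B + l))"
    using assms by (intro sum.cong refl) (simp add: mat_tensor_index)
  finally show ?thesis .
qed

lemma mat_tensor_one_right_mult_vec_index:
  assumes "i < dim_row A" "k < N" "dim_vec w = dim_col A * N"
  shows "(mat_tensor A (1\<^sub>m N) *\<^sub>v w) $ (i * N + k) = (\<Sum>j<dim_col A. A $$ (i, j) * w $ (j * N + k))"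
  using mat_tensor_mult_vec_index[of i A k "1\<^sub>m N" w] assms
  by (simp add: if_distrib if_distribR sum.delta cong: if_cong)

lemma mat_tensor_one_left_row_sum:
  assumes "a < M" "i < dim_row B"
  shows "(\<Sum>q<M * dim_col B. mat_tensor (1\<^sub>m M) B $$ (a * dim_row B + i, q) * g q) =
    (\<Sum>j<dim_col B. B $$ (i, j) * g (a * dim_col B + j))"
proof -
  have "(\<Sum>q<M * dim_col B. mat_tensor (1\<^sub>m M) B $$ (a * dim_row B + i, q) * g q) =
      (\<Sum>a'<M. if a' = a then (\<Sum>j<dim_col B. B $$ (i, j) * g (a' * dim_col B + j)) else 0)"
    unfolding sum_lessThan_mult using assms mat_tensor_index[of a "1\<^sub>m M" _ i B]
    by (intro sum.cong refl) auto
  also have "\<dots> = (\<Sum>j<dim_col B. B $$ (i, j) * g (a * dim_col B + j))"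
    using assms(1) by simp
  finally show ?thesis .
qed

lemma vec_tensor_ket:
  assumes "i < N" "j < N"
  shows "vec_tensor (ket N i) (ket N j) = ket (N * N) (i * N + j)"
proof (rule eq_vecI)
  fix s assume "s < dim_vec (ket (N * N) (i * N + j))"
  then have s: "s < N * N" by (simp add: ket_def)
  then have N: "N > 0" by (cases N) auto
  define x y where "x = s div N" and "y = s mod N"
  have xy: "x < N" "y < N" "s = x * N + y"
    using s N by (auto simp: x_def y_def less_mult_imp_div_less)
  show "vec_tensor (ket N i) (ket N j) $ s = ket (N * N) (i * N + j) $ s"
    using vec_tensor_index[of x "ket N i" y "ket N j"] xy assms s
      mult_add_less_mult[OF assms] mult_add_eq_mult_add_iff[of y N j x i]
    by (auto simp: ket_def)
qed (simp add: vec_tensor_def ket_def)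

lemma dim_bell [simp]: "dim_vec (bell k) = 2 ^ k * 2 ^ k"
  by (simp add: bell_def)

lemma bell_index:
  assumes "x < 2 ^ k" "y < 2 ^ k"
  shows "bell k $ (x * 2 ^ k + y) = (if x = y then 1 / complex_of_real (sqrt (2 ^ k)) else 0)"
proof -
  let ?K = "2 ^ k :: nat"
  have diag: "i * ?K + i < ?K * ?K" if "i < ?K" for i
    using mult_add_less_mult[OF that that] .
  have "(\<Sum>i<?K. vec_tensor (ket ?K i) (ket ?K i) $ (x * ?K + y)) =
      (\<Sum>i<?K. if i = x then (if x = y then 1 else 0) else 0)"
    using assms mult_add_less_mult[OF assms]
    by (intro sum.cong refl)
      (simp add: vec_tensor_ket, auto simp: ket_def diag mult_add_eq_mult_add_iff)
  then show ?thesis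
    using assms mult_add_less_mult[OF assms]
    unfolding bell_def two_powr_minus_half by (simp add: sum.delta')
qed

lemma phi_index:
  fixes m n :: nat and U :: "complex mat"
  defines "M \<equiv> 2 ^ m :: nat" and "N \<equiv> 2 ^ n :: nat"
  assumes U: "U \<in> carrier_mat (M * N) (M * N)"
    and a: "a < M" and s: "s < M * N" and e: "e < N"
  shows "phi m n U $ ((a * (M * N) + s) * N + e) =
    U $$ (s, a * N + e) / complex_of_real (sqrt (real (M * N)))"
proof -
  let ?X = "mat_tensor (1\<^sub>m M) U" and ?v = "vec_tensor (bell m) (bell n)"
  have dim_X: "dim_row ?X = M * (M * N)" "dim_col ?X = M * (M * N)"
    using U by (simp_all add: mat_tensor_def)
  have dim_v: "dim_vec ?v = M * (M * N) * N"
    by (simp add: vec_tensor_def M_def N_def)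
  have v: "?v $ ((a * (M * N) + (b * N + c)) * N + e) =
      (if a = b then 1 / complex_of_real (sqrt M) else 0) *
      (if c = e then 1 / complex_of_real (sqrt N) else 0)"
    if b: "b < M" and c: "c < N" for b c
  proof -
    have idx: "(a * (M * N) + (b * N + c)) * N + e = (a * M + b) * dim_vec (bell n) + (c * N + e)"
      by (simp add: algebra_simps N_def)
    have "?v $ ((a * (M * N) + (b * N + c)) * N + e) = bell m $ (a * M + b) * bell n $ (c * N + e)"
      unfolding idx using mult_add_less_mult a b c e
      by (intro vec_tensor_index) (simp_all add: M_def N_def)
    then show ?thesis
      using bell_index[of a m b] bell_index[of c n e] a b c e by (simp add: M_def N_def)
  qed
  have "phi m n U $ ((a * (M * N) + s) * N + e) =
      (\<Sum>q<M * (M * N). ?X $$ (a * (M * N) + s, q) * ?v $ (q * N + e))"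
    unfolding phi_def M_def[symmetric] N_def[symmetric]
    using mat_tensor_one_right_mult_vec_index[of "a * (M * N) + s" ?X e N ?v]
      mult_add_less_mult[OF a s] e dim_X dim_v by simp
  also have "\<dots> = (\<Sum>r<M * N. U $$ (s, r) * ?v $ ((a * (M * N) + r) * N + e))"
    using mat_tensor_one_left_row_sum[of a M s U "\<lambda>q. ?v $ (q * N + e)"] a s U by simp
  also have "\<dots> = (\<Sum>b<M. \<Sum>c<N. U $$ (s, b * N + c) *
      ((if a = b then 1 / complex_of_real (sqrt M) else 0) *
       (if c = e then 1 / complex_of_real (sqrt N) else 0)))"
    unfolding sum_lessThan_mult by (intro sum.cong refl) (simp add: v)
  also have "\<dots> = U $$ (s, a * N + e) / complex_of_real (sqrt (real (M * N)))"
  proof -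
    have mult_if_zero: "x * (if P then y else 0) = (if P then x * y else 0)"
      and divide_if_zero: "(if P then y else 0) / x = (if P then y / x else 0)" for x y :: complex and P
      by simp_all
    show ?thesis using a e by (simp add: mult_if_zero divide_if_zero sum.delta' real_sqrt_mult)
  qed
  finally show ?thesis .
qed

lemma mtrace_mult_outer_unit_vec:
  assumes R: "R \<in> carrier_mat D D" and t: "t < D"
  shows "mtrace (R * outer (unit_vec D t)) = R $$ (t, t)"
proof -
  have "(R * outer (unit_vec D t)) $$ (r, r) = (if r = t then R $$ (t, t) else 0)"
    if r: "r < D" for r
  proof -
    have "(R * outer (unit_vec D t)) $$ (r, r) =
        (\<Sum>s<D. R $$ (r, s) * (if s = t then 1 else 0) * (if r = t then 1 else 0))"
      using R r t by (simp add: outer_def scalar_prod_def atLeast0LessThan mult.assoc)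
    also have "\<dots> = (\<Sum>s<D. if s = t then (if r = t then R $$ (r, t) else 0) else 0)"
      by (intro sum.cong refl) auto
    also have "\<dots> = (if r = t then R $$ (t, t) else 0)"
      using t by simp
    finally show ?thesis .
  qed
  then have "mtrace (R * outer (unit_vec D t)) = (\<Sum>r<D. if r = t then R $$ (t, t) else 0)"
    using R unfolding mtrace_def by (intro sum.cong) auto
  then show ?thesis using t by simp
qed

lemma ptrace_first_outer_diag:
  assumes v: "dim_vec v = A * B" and t: "t < B"
  shows "ptrace_first A B (outer v) $$ (t, t) = complex_of_real (\<Sum>a<A. (cmod (v $ (a * B + t)))\<^sup>2)"
proof -
  have "ptrace_first A B (outer v) $$ (t, t) = (\<Sum>a<A. v $ (a * B + t) * cnj (v $ (a * B + t)))"
    using v t mult_add_less_mult[of _ A t B] by (simp add: ptrace_first_def outer_def)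
  then show ?thesis by (simp only: of_real_sum complex_norm_square)
qed

lemma unitary_row_norm:
  assumes "unitary D U" "r < D"
  shows "(\<Sum>c<D. (cmod (U $$ (r, c)))\<^sup>2) = 1"
proof -
  have U: "U \<in> carrier_mat D D" "U * adj U = 1\<^sub>m D" using assms(1) by (auto simp: unitary_def)
  have "complex_of_real (\<Sum>c<D. (cmod (U $$ (r, c)))\<^sup>2) = (U * adj U) $$ (r, r)"
    unfolding of_real_sum complex_norm_square
    using U(1) assms(2) by (simp add: scalar_prod_def adj_def atLeast0LessThan)
  also have "\<dots> = 1" using U assms(2) by simp
  finally show ?thesis by (simp only: of_real_eq_1_iff)
qed

lemma unitary_col_norm:
  assumes "unitary D U" "c < D"
  shows "(\<Sum>r<D. (cmod (U $$ (r, c)))\<^sup>2) = 1"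
proof -
  have U: "U \<in> carrier_mat D D" "adj U * U = 1\<^sub>m D" using assms(1) by (auto simp: unitary_def)
  have "complex_of_real (\<Sum>r<D. (cmod (U $$ (r, c)))\<^sup>2) = (adj U * U) $$ (c, c)"
    unfolding of_real_sum complex_norm_square
    using U(1) assms(2) by (simp add: scalar_prod_def adj_def atLeast0LessThan mult.commute)
  also have "\<dots> = 1" using U assms(2) by simp
  finally show ?thesis by (simp only: of_real_eq_1_iff)
qed

definition block_weight :: "nat \<Rightarrow> nat \<Rightarrow> complex mat \<Rightarrow> nat \<Rightarrow> nat \<Rightarrow> real" where
  "block_weight M N U i j = (\<Sum>a<M. \<Sum>b<M. (cmod (U $$ (b * N + i, a * N + j)))\<^sup>2)"

lemma block_weight_nonneg: "block_weight M N U i j \<ge> 0"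
  by (simp add: block_weight_def sum_nonneg)

lemma unitary_block_weight_row_sum:
  assumes U: "unitary (M * N) U" and i: "i < N"
  shows "(\<Sum>j<N. block_weight M N U i j) = M"
proof -
  have "(\<Sum>j<N. block_weight M N U i j) =
      (\<Sum>b<M. \<Sum>a<M. \<Sum>j<N. (cmod (U $$ (b * N + i, a * N + j)))\<^sup>2)"
    unfolding block_weight_def by (subst sum.swap, subst (2) sum.swap, subst sum.swap) (rule refl)
  also have "\<dots> = (\<Sum>b<M. \<Sum>c<M * N. (cmod (U $$ (b * N + i, c)))\<^sup>2)"
    by (simp only: sum_lessThan_mult)
  also have "\<dots> = (\<Sum>b<M. 1)"
    using unitary_row_norm[OF U] mult_add_less_mult i by (intro sum.cong refl) auto
  finally show ?thesis by simp
qed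

lemma unitary_block_weight_col_sum:
  assumes U: "unitary (M * N) U" and j: "j < N"
  shows "(\<Sum>i<N. block_weight M N U i j) = M"
proof -
  have "(\<Sum>i<N. block_weight M N U i j) =
      (\<Sum>a<M. \<Sum>b<M. \<Sum>i<N. (cmod (U $$ (b * N + i, a * N + j)))\<^sup>2)"
    unfolding block_weight_def by (subst sum.swap, subst (2) sum.swap) (rule refl)
  also have "\<dots> = (\<Sum>a<M. \<Sum>r<M * N. (cmod (U $$ (r, a * N + j)))\<^sup>2)"
    by (simp only: sum_lessThan_mult)
  also have "\<dots> = (\<Sum>a<M. 1)"
    using unitary_col_norm[OF U] mult_add_less_mult j by (intro sum.cong refl) auto
  finally show ?thesis by simp
qed

lemma pdist_eq_block_weight:
  fixes m n :: nat and U :: "complex mat"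
  defines "M \<equiv> 2 ^ m :: nat" and "N \<equiv> 2 ^ n :: nat"
  assumes U: "U \<in> carrier_mat (M * N) (M * N)" and i: "i < N" and j: "j < N"
  shows "pdist m n U i j = complex_of_real (block_weight M N U i j / M)"
proof -
  have t: "i * N + j < N * N" using mult_add_less_mult[OF i j] .
  have dim_phi: "dim_vec (phi m n U) = (M * M) * (N * N)"
    using U by (simp add: phi_def mat_tensor_def M_def N_def)
  have ket: "vec_tensor (ket N i) (ket N j) = unit_vec (N * N) (i * N + j)"
    using vec_tensor_ket[OF i j] by (simp add: ket_def)
  have rho: "rho m n U \<in> carrier_mat (N * N) (N * N)"
    by (simp add: rho_def ptrace_first_def N_def)
  have "pdist m n U i j = N * rho m n U $$ (i * N + j, i * N + j)"
    unfolding pdist_def N_def[symmetric] ket mtrace_mult_outer_unit_vec[OF rho t]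
    by (simp add: N_def)
  also have "rho m n U $$ (i * N + j, i * N + j) =
      complex_of_real (\<Sum>x<M * M. (cmod (phi m n U $ (x * (N * N) + (i * N + j))))\<^sup>2)"
    unfolding rho_def M_def N_def using dim_phi t
    by (intro ptrace_first_outer_diag) (simp_all add: M_def N_def)
  also have "(\<Sum>x<M * M. (cmod (phi m n U $ (x * (N * N) + (i * N + j))))\<^sup>2) =
      (\<Sum>a<M. \<Sum>b<M. (cmod (U $$ (b * N + i, a * N + j)))\<^sup>2 / (M * N))"
    unfolding sum_lessThan_mult
  proof (intro sum.cong refl)
    fix a b assume a: "a \<in> {..<M}" and b: "b \<in> {..<M}"
    have idx: "(a * M + b) * (N * N) + (i * N + j) = (a * (M * N) + (b * N + i)) * N + j"
      by (simp add: algebra_simps)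
    have "phi m n U $ ((a * M + b) * (N * N) + (i * N + j)) =
        U $$ (b * N + i, a * N + j) / complex_of_real (sqrt (real (M * N)))"
      unfolding idx using a b i j U mult_add_less_mult[of b M i N]
        phi_index[where m = m and n = n and U = U and a = a and s = "b * N + i" and e = j]
      by (simp add: M_def N_def)
    then show "(cmod (phi m n U $ ((a * M + b) * (N * N) + (i * N + j))))\<^sup>2 =
        (cmod (U $$ (b * N + i, a * N + j)))\<^sup>2 / (M * N)"
      by (simp add: norm_divide power_divide)
  qed
  finally show ?thesis
    by (simp add: block_weight_def sum_divide_distrib[symmetric] N_def M_def)
qed

lemma doubly_stochastic_normalized:
  fixes W :: "nat \<Rightarrow> nat \<Rightarrow> real"
  assumes "c > 0"
    and "\<And>i j. W i j \<ge> 0"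
    and "\<And>i. i < d \<Longrightarrow> (\<Sum>j<d. W i j) = c"
    and "\<And>j. j < d \<Longrightarrow> (\<Sum>i<d. W i j) = c"
  shows "doubly_stochastic d (mat d d (\<lambda>(i, j). complex_of_real (W i j / c)))"
proof -
  let ?Q = "mat d d (\<lambda>(i, j). complex_of_real (W i j / c))"
  have "?Q *\<^sub>v ones d = ones d"
  proof (rule eq_vecI)
    fix i assume "i < dim_vec (ones d)"
    then have i: "i < d" by (simp add: ones_def)
    have "(?Q *\<^sub>v ones d) $ i = complex_of_real ((\<Sum>j<d. W i j) / c)"
      using i by (simp add: ones_def scalar_prod_def atLeast0LessThan sum_divide_distrib)
    then show "(?Q *\<^sub>v ones d) $ i = ones d $ i"
      using i assms(1,3) by (simp add: ones_def)
  qed (simp add: ones_def)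
  moreover have "transpose_mat ?Q *\<^sub>v ones d = ones d"
  proof (rule eq_vecI)
    fix j assume "j < dim_vec (ones d)"
    then have j: "j < d" by (simp add: ones_def)
    have "(transpose_mat ?Q *\<^sub>v ones d) $ j = complex_of_real ((\<Sum>i<d. W i j) / c)"
      using j by (simp add: ones_def scalar_prod_def atLeast0LessThan sum_divide_distrib)
    then show "(transpose_mat ?Q *\<^sub>v ones d) $ j = ones d $ j"
      using j assms(1,4) by (simp add: ones_def)
  qed (simp add: ones_def)
  ultimately show ?thesis
    using assms(1,2) by (simp add: doubly_stochastic_def)
qed

theorem lemma2:
  fixes m n :: nat and U :: "complex mat"
  assumes "m > 0" and "n > 0"
    and "unitary (2^m * 2^n) U"
  shows "doubly_stochastic (2^n) (Qmat m n U)"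
proof -
  let ?M = "2 ^ m :: nat" and ?N = "2 ^ n :: nat"
  have U: "U \<in> carrier_mat (?M * ?N) (?M * ?N)"
    using assms(3) by (simp add: unitary_def)
  have "Qmat m n U = mat ?N ?N (\<lambda>(i, j). complex_of_real (block_weight ?M ?N U i j / ?M))"
    unfolding Qmat_def using pdist_eq_block_weight[OF U] by (intro cong_mat) auto
  also have "doubly_stochastic ?N \<dots>"
    by (rule doubly_stochastic_normalized)
      (simp_all add: block_weight_nonneg unitary_block_weight_row_sum[OF assms(3)]
        unitary_block_weight_col_sum[OF assms(3)])
  finally show ?thesis .
qed

end
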